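(* Let $\Gamma$ be a $Q$-polynomial distance-regular graph with vertex set $X$ and diameter $D$, and suppose $\Gamma$ is pseudo-vertex-transitive. Then for all integers $0\le i\le D$ and all vertices $x,y\in X$, the $i$-th subconstituents $\Delta_i(x)$ and $\Delta_i(y)$ have the same spectrum.
   Context: Let $\Gamma$ have distance $\partial$, adjacency matrix $A$, $V=\mathbb{C}^X$. For $x\in X$ and $0\le i\le D$, $\Delta_i(x)$ is the subgraph induced on $\{y:\partial(x,y)=i\}$, and $E^*_i(x)$ is the diagonal matrix with $(E^*_i(x))_{yy}=1$ if $\partial(x,y)=i$ and $0$ otherwise. The Terwilliger algebra $T(x)$ is the subalgebra of $\mathrm{Mat}_X(\mathbb{C})$ generated by $A,E^*_0(x),\dots,E^*_D(x)$. $\Gamma$ is pseudo-vertex-transitive if for all $x,y\in X$: (i) there is a $\mathbb{C}$-algebra isomorphism $T(x)\to T(y)$ sending $A\mapsto A$ and $E^*_i(x)\mapsto E^*_i(y)$ for all $i$; and (ii) there is a $\mathbb{C}$-linear bijection $\rho:V\to V$ with $\rho A=A\rho$ and $\rho E^*_i(x)=E^*_i(y)\rho$ for all $i$. The spectrum of a graph is the multiset of eigenvalues of its adjacency matrix. $Q$-polynomial means: the primitive idempotents of the Bose–Mesner algebra can be ordered $E_0,\dots,E_D$ so that the Krein parameters $q^h_{ij}$ (defined by $E_i\circ E_j=|X|^{-1}\sum_h q^h_{ij}E_h$, $\circ$ the entrywise product) vanish when one of $h,i,j$ exceeds the sum of the other two and are nonzero when one equals the sum of the other two. *)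

theory Defs
  imports "HOL-Analysis.Analysis" "HOL-Computational_Algebra.Polynomial"
begin

text \<open>A finite simple graph: vertex set X = UNIV of a finite type 'n, adjacency E
  (symmetric, irreflexive). Matrices in Mat_X(C) are complex^'n^'n; V = C^X.\<close>

type_synonym 'n cmat = "complex ^'n ^'n"

definition simple_graph :: "('n \<Rightarrow> 'n \<Rightarrow> bool) \<Rightarrow> bool" where
  "simple_graph E \<longleftrightarrow> (\<forall>u v. E u v \<longrightarrow> E v u) \<and> (\<forall>u. \<not> E u u)"

definition connected_graph :: "('n \<Rightarrow> 'n \<Rightarrow> bool) \<Rightarrow> bool" where
  "connected_graph E \<longleftrightarrow> (\<forall>u v. \<exists>k. (E ^^ k) u v)"

definition gdist :: "('n \<Rightarrow> 'n \<Rightarrow> bool) \<Rightarrow> 'n \<Rightarrow> 'n \<Rightarrow> nat" where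
  "gdist E u v = (LEAST k. (E ^^ k) u v)"

definition diam :: "('n::finite \<Rightarrow> 'n \<Rightarrow> bool) \<Rightarrow> nat" where
  "diam E = Max {gdist E u v | u v. True}"

definition distance_regular :: "('n::finite \<Rightarrow> 'n \<Rightarrow> bool) \<Rightarrow> bool" where
  "distance_regular E \<longleftrightarrow> simple_graph E \<and> connected_graph E \<and>
     (\<forall>i j x y x' y'. gdist E x y = gdist E x' y' \<longrightarrow>
        card {z. gdist E x z = i \<and> gdist E y z = j} =
        card {z. gdist E x' z = i \<and> gdist E y' z = j})"

definition adj_matrix :: "('n::finite \<Rightarrow> 'n \<Rightarrow> bool) \<Rightarrow> 'n cmat" where
  "adj_matrix E = (\<chi> u v. if E u v then 1 else 0)"

definition cscale :: "complex \<Rightarrow> 'n::finite cmat \<Rightarrow> 'n cmat" where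
  "cscale c M = (\<chi> u v. c * M $ u $ v)"

definition hadamard :: "'n::finite cmat \<Rightarrow> 'n cmat \<Rightarrow> 'n cmat" where
  "hadamard M N = (\<chi> u v. M $ u $ v * N $ u $ v)"

definition dist_matrix :: "('n::finite \<Rightarrow> 'n \<Rightarrow> bool) \<Rightarrow> nat \<Rightarrow> 'n cmat" where
  "dist_matrix E i = (\<chi> u v. if gdist E u v = i then 1 else 0)"

definition bose_mesner :: "('n::finite \<Rightarrow> 'n \<Rightarrow> bool) \<Rightarrow> 'n cmat set" where
  "bose_mesner E = {(\<Sum>i\<le>diam E. cscale (c i) (dist_matrix E i)) | c. True}"

definition primitive_idempotent :: "('n::finite \<Rightarrow> 'n \<Rightarrow> bool) \<Rightarrow> 'n cmat \<Rightarrow> bool" where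
  "primitive_idempotent E M \<longleftrightarrow> M \<in> bose_mesner E \<and> M \<noteq> 0 \<and> M ** M = M \<and>
     (\<forall>F \<in> bose_mesner E. F ** F = F \<and> M ** F = F \<longrightarrow> F = 0 \<or> F = M)"

definition Q_polynomial :: "('n::finite \<Rightarrow> 'n \<Rightarrow> bool) \<Rightarrow> bool" where
  "Q_polynomial E \<longleftrightarrow> distance_regular E \<and>
    (\<exists>(Ei :: nat \<Rightarrow> 'n cmat) (q :: nat \<Rightarrow> nat \<Rightarrow> nat \<Rightarrow> complex).
       bij_betw Ei {..diam E} {M. primitive_idempotent E M} \<and>
       (\<forall>i\<le>diam E. \<forall>j\<le>diam E.
          hadamard (Ei i) (Ei j) =
            cscale (1 / of_nat CARD('n)) (\<Sum>h\<le>diam E. cscale (q h i j) (Ei h))) \<and>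
       (\<forall>h\<le>diam E. \<forall>i\<le>diam E. \<forall>j\<le>diam E.
          (h > i + j \<or> i > h + j \<or> j > h + i) \<longrightarrow> q h i j = 0) \<and>
       (\<forall>h\<le>diam E. \<forall>i\<le>diam E. \<forall>j\<le>diam E.
          (h = i + j \<or> i = h + j \<or> j = h + i) \<longrightarrow> q h i j \<noteq> 0))"

definition dual_idem :: "('n::finite \<Rightarrow> 'n \<Rightarrow> bool) \<Rightarrow> 'n \<Rightarrow> nat \<Rightarrow> 'n cmat" where
  "dual_idem E x i = (\<chi> u v. if u = v \<and> gdist E x u = i then 1 else 0)"

inductive_set terwilliger :: "('n::finite \<Rightarrow> 'n \<Rightarrow> bool) \<Rightarrow> 'n \<Rightarrow> 'n cmat set"
  for E x where
  gen_A: "adj_matrix E \<in> terwilliger E x"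
| gen_Es: "i \<le> diam E \<Longrightarrow> dual_idem E x i \<in> terwilliger E x"
| one: "mat 1 \<in> terwilliger E x"
| add: "M \<in> terwilliger E x \<Longrightarrow> N \<in> terwilliger E x \<Longrightarrow> M + N \<in> terwilliger E x"
| scale: "M \<in> terwilliger E x \<Longrightarrow> cscale c M \<in> terwilliger E x"
| mult: "M \<in> terwilliger E x \<Longrightarrow> N \<in> terwilliger E x \<Longrightarrow> M ** N \<in> terwilliger E x"

definition pseudo_vertex_transitive :: "('n::finite \<Rightarrow> 'n \<Rightarrow> bool) \<Rightarrow> bool" where
  "pseudo_vertex_transitive E \<longleftrightarrow> (\<forall>x y.
     (\<exists>\<phi>. bij_betw \<phi> (terwilliger E x) (terwilliger E y) \<and>
        (\<forall>M\<in>terwilliger E x. \<forall>N\<in>terwilliger E x. \<phi> (M + N) = \<phi> M + \<phi> N) \<and>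
        (\<forall>M\<in>terwilliger E x. \<forall>c. \<phi> (cscale c M) = cscale c (\<phi> M)) \<and>
        (\<forall>M\<in>terwilliger E x. \<forall>N\<in>terwilliger E x. \<phi> (M ** N) = \<phi> M ** \<phi> N) \<and>
        \<phi> (mat 1) = mat 1 \<and>
        \<phi> (adj_matrix E) = adj_matrix E \<and>
        (\<forall>i\<le>diam E. \<phi> (dual_idem E x i) = dual_idem E y i)) \<and>
     (\<exists>R :: 'n cmat. invertible R \<and> R ** adj_matrix E = adj_matrix E ** R \<and>
        (\<forall>i\<le>diam E. R ** dual_idem E x i = dual_idem E y i ** R)))"

text \<open>characteristic polynomial det(tI - A_S) of the principal submatrix on S,
  and the spectrum (multiset of its roots) of the induced subgraph on S\<close>
definition charpoly_on :: "'n::finite cmat \<Rightarrow> 'n set \<Rightarrow> complex poly" where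
  "charpoly_on M S = (\<Sum>p\<in>{p. p permutes S}. of_int (sign p) *
      (\<Prod>u\<in>S. (if p u = u then [:0, 1:] else 0) - [: M $ u $ p u :]))"

definition induced_spectrum :: "('n::finite \<Rightarrow> 'n \<Rightarrow> bool) \<Rightarrow> 'n set \<Rightarrow> complex multiset" where
  "induced_spectrum E S = proots (charpoly_on (adj_matrix E) S)"

definition subconst :: "('n \<Rightarrow> 'n \<Rightarrow> bool) \<Rightarrow> 'n \<Rightarrow> nat \<Rightarrow> 'n set" where
  "subconst E x i = {y. gdist E x y = i}"

end

(* An invertible R that commutes with A and carries E*_i(x)
   to E*_i(y) conjugates E*_i(x) A E*_i(x) into E*_i(y) A E*_i(y).  These are the
   adjacency matrices of Delta_i(x) and Delta_i(y) padded with zero rows and columns,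
   so their characteristic polynomials are t^(|X| - |Delta_i|) times those of the
   subconstituents, and the two padding exponents agree because conjugation also
   preserves trace E*_i = |Delta_i|. *)

theory Submission
  imports Defs
begin

definition poly_matrix :: "'a::zero^'n^'m \<Rightarrow> 'a poly^'n^'m" where
  "poly_matrix M = (\<chi> u v. [:M $ u $ v:])"

definition charpoly :: "'a::comm_ring_1^'n::finite^'n \<Rightarrow> 'a poly" where
  "charpoly M = det (mat [:0, 1:] - poly_matrix M)"

definition restrict_matrix :: "'a::zero^'n^'n \<Rightarrow> 'n set \<Rightarrow> 'a^'n^'n" where
  "restrict_matrix M S = (\<chi> u v. if u \<in> S \<and> v \<in> S then M $ u $ v else 0)"

definition diag_indicator :: "'n set \<Rightarrow> 'a::zero_neq_one^'n^'n" where
  "diag_indicator S = (\<chi> u v. if u = v \<and> u \<in> S then 1 else 0)"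

lemma matrix_diff_ldistrib:
  fixes A :: "'a::ring_1^'n::finite^'m"
  shows "A ** (B - C) = A ** B - A ** C"
  by (simp add: matrix_matrix_mult_def vec_eq_iff sum_subtractf algebra_simps)

lemma matrix_diff_rdistrib:
  fixes A :: "'a::ring_1^'n::finite^'m"
  shows "(A - B) ** C = A ** C - B ** C"
  by (simp add: matrix_matrix_mult_def vec_eq_iff sum_subtractf algebra_simps)

lemma matrix_mul_mat_commute:
  fixes A :: "'a::comm_semiring_1^'n::finite^'n"
  shows "mat c ** A = A ** mat c"
  by (simp add: matrix_matrix_mult_def mat_def vec_eq_iff if_distrib if_distribR
      mult.commute cong: if_cong)

lemma poly_matrix_mult:
  fixes A :: "'a::comm_semiring_1^'n::finite^'m"
  shows "poly_matrix (A ** B) = poly_matrix A ** poly_matrix B"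
  by (simp add: poly_matrix_def matrix_matrix_mult_def vec_eq_iff sum_to_poly mult.commute)

lemma poly_matrix_mat: "poly_matrix (mat c) = mat [:c:]"
  by (simp add: poly_matrix_def mat_def vec_eq_iff)

lemma charpoly_similar:
  fixes R R' M :: "'a::comm_ring_1^'n::finite^'n"
  assumes "R ** R' = mat 1" and "R' ** R = mat 1"
  shows "charpoly (R ** M ** R') = charpoly M"
proof -
  let ?X = "mat [:0, 1:] :: 'a poly^'n^'n"
  have "?X = poly_matrix R ** ?X ** poly_matrix R'"
    by (metis assms(1) matrix_mul_assoc matrix_mul_mat_commute matrix_mul_lid
        poly_matrix_mult poly_matrix_mat pCons_one)
  then have "?X - poly_matrix (R ** M ** R') =
      poly_matrix R ** (?X - poly_matrix M) ** poly_matrix R'"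
    by (simp add: poly_matrix_mult matrix_diff_ldistrib matrix_diff_rdistrib matrix_mul_assoc)
  then have "charpoly (R ** M ** R') = det (poly_matrix R' ** poly_matrix R) * charpoly M"
    unfolding charpoly_def by (simp add: det_mul ac_simps)
  then show ?thesis
    by (simp add: assms(2) poly_matrix_mat pCons_one flip: poly_matrix_mult)
qed

lemma charpoly_restrict_matrix:
  fixes M :: "'n::finite cmat"
  shows "charpoly (restrict_matrix M S) = [:0, 1:] ^ card (- S) * charpoly_on M S"
proof -
  let ?X = "[:0, 1:] :: complex poly"
  let ?N = "mat ?X - poly_matrix (restrict_matrix M S)"
  let ?f = "\<lambda>p. of_int (sign p) * (\<Prod>u\<in>UNIV. ?N $ u $ p u)"
  let ?g = "\<lambda>p. \<Prod>u\<in>S. (if p u = u then ?X else 0) - [:M $ u $ p u:]"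
  have vanish: "?f p = 0" if "p permutes UNIV" and "\<not> p permutes S" for p
  proof -
    from that obtain u where "u \<notin> S" and "p u \<noteq> u"
      unfolding permutes_def by blast
    then have "?N $ u $ p u = 0"
      by (simp add: mat_def poly_matrix_def restrict_matrix_def)
    then have "(\<Prod>u\<in>UNIV. ?N $ u $ p u) = 0"
      by (meson UNIV_I finite prod_zero)
    then show ?thesis
      by simp
  qed
  have factor: "?f p = ?X ^ card (- S) * (of_int (sign p) * ?g p)" if p: "p permutes S" for p
  proof -
    have "(\<Prod>u\<in>- S. ?N $ u $ p u) = ?X ^ card (- S)"
      using permutes_not_in[OF p] by (simp add: mat_def poly_matrix_def restrict_matrix_def)
    moreover have "(\<Prod>u\<in>S. ?N $ u $ p u) = ?g p"
      using permutes_in_image[OF p]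
      by (intro prod.cong) (auto simp: mat_def poly_matrix_def restrict_matrix_def)
    moreover have "(\<Prod>u\<in>UNIV. ?N $ u $ p u) =
        (\<Prod>u\<in>S. ?N $ u $ p u) * (\<Prod>u\<in>- S. ?N $ u $ p u)"
      using prod.union_disjoint[of S "- S"] by (simp add: Compl_partition)
    ultimately show ?thesis
      by (simp add: mult_ac)
  qed
  have "charpoly (restrict_matrix M S) = sum ?f {p. p permutes UNIV}"
    unfolding charpoly_def det_def ..
  also have "\<dots> = sum ?f {p. p permutes S}"
    using vanish permutes_subset[of _ S UNIV] by (intro sum.mono_neutral_right) auto
  also have "\<dots> = (\<Sum>p\<in>{p. p permutes S}. ?X ^ card (- S) * (of_int (sign p) * ?g p))"
    by (rule sum.cong[OF refl], rule factor) simp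
  also have "\<dots> = ?X ^ card (- S) * charpoly_on M S"
    unfolding charpoly_on_def by (simp add: sum_distrib_left)
  finally show ?thesis .
qed

lemma diag_indicator_mult_left:
  fixes M :: "'a::semiring_1^'n::finite^'n"
  shows "(diag_indicator S ** M) $ u $ v = (if u \<in> S then M $ u $ v else 0)"
  by (simp add: diag_indicator_def matrix_matrix_mult_def if_distrib if_distribR cong: if_cong)

lemma diag_indicator_mult_right:
  fixes M :: "'a::semiring_1^'n::finite^'n"
  shows "(M ** diag_indicator S) $ u $ v = (if v \<in> S then M $ u $ v else 0)"
  by (simp add: diag_indicator_def matrix_matrix_mult_def if_distrib if_distribR sum.If_cases
      Collect_conj_eq)

lemma diag_indicator_sandwich:
  fixes M :: "'a::semiring_1^'n::finite^'n"
  shows "diag_indicator S ** M ** diag_indicator S = restrict_matrix M S"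
  by (simp add: vec_eq_iff diag_indicator_mult_left diag_indicator_mult_right restrict_matrix_def)

lemma trace_diag_indicator:
  "trace (diag_indicator S :: 'a::semiring_1^'n::finite^'n) = of_nat (card S)"
  by (simp add: trace_def diag_indicator_def sum.If_cases)

lemma dual_idem_eq_diag_indicator: "dual_idem E x i = diag_indicator (subconst E x i)"
  by (simp add: dual_idem_def diag_indicator_def subconst_def vec_eq_iff)

lemma conjugate_if_intertwines:
  fixes R R' N N' :: "'a::semiring_1^'n::finite^'n"
  assumes "R ** R' = mat 1" and "R ** N = N' ** R"
  shows "N' = R ** N ** R'"
  by (metis assms matrix_mul_assoc matrix_mul_rid)

lemma charpoly_on_eq_if_intertwines:
  fixes M R :: "'n::finite cmat"
  assumes "invertible R" and "R ** M = M ** R"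
    and "R ** diag_indicator S = diag_indicator T ** R"
  shows "charpoly_on M S = charpoly_on M T"
proof -
  let ?P = "diag_indicator S :: 'n cmat" and ?Q = "diag_indicator T :: 'n cmat"
  obtain R' where R': "R ** R' = mat 1" "R' ** R = mat 1"
    using assms(1) unfolding invertible_def by blast
  have Q: "?Q = R ** ?P ** R'"
    using R'(1) assms(3) by (rule conjugate_if_intertwines)
  have "R ** (?P ** M ** ?P) = ?Q ** M ** ?Q ** R"
    using assms(2,3) by (metis matrix_mul_assoc)
  then have "restrict_matrix M T = R ** restrict_matrix M S ** R'"
    unfolding diag_indicator_sandwich[symmetric] by (rule conjugate_if_intertwines[OF R'(1)])
  then have "charpoly (restrict_matrix M T) = charpoly (restrict_matrix M S)"
    using R' by (simp add: charpoly_similar)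
  moreover have "card T = card S"
  proof -
    have "of_nat (card T) = trace (R ** ?P ** R')"
      by (simp add: trace_diag_indicator flip: Q)
    also have "\<dots> = trace (R' ** R ** ?P)"
      by (simp only: trace_mul_sym[of "R ** ?P"] matrix_mul_assoc)
    also have "\<dots> = of_nat (card S)"
      by (simp add: R'(2) trace_diag_indicator)
    finally show ?thesis
      by simp
  qed
  then have "card (- T) = card (- S)"
    by (simp add: Compl_eq_Diff_UNIV card_Diff_subset)
  ultimately show ?thesis
    by (simp add: charpoly_restrict_matrix)
qed

theorem lemma4p7:
  fixes E :: "'n::finite \<Rightarrow> 'n \<Rightarrow> bool" and i :: nat and x y :: 'n
  assumes "Q_polynomial E"
    and "pseudo_vertex_transitive E"
    and "i \<le> diam E"
  shows "induced_spectrum E (subconst E x i) = induced_spectrum E (subconst E y i)"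
proof -
  obtain R :: "'n cmat" where "invertible R" and "R ** adj_matrix E = adj_matrix E ** R"
    and "R ** dual_idem E x i = dual_idem E y i ** R"
    using assms(2,3) unfolding pseudo_vertex_transitive_def by blast
  then have "charpoly_on (adj_matrix E) (subconst E x i) =
      charpoly_on (adj_matrix E) (subconst E y i)"
    by (intro charpoly_on_eq_if_intertwines) (simp_all add: dual_idem_eq_diag_indicator)
  then show ?thesis
    unfolding induced_spectrum_def by simp
qed

end
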